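(* Let $\epsilon>0$ and let $A\in\mathbb{R}^{n\times d}$ have all rows in the Euclidean unit ball $\mathbb{B}$. Run the Sublinear Perceptron (described in the context), and let $i_1,\dots,i_T$ be the indices it samples. Then the vector $\bar p=\frac1T\sum_{t}e_{i_t}\in\mathbb{R}^n$ is, with probability at least $1/2$, an $O(\epsilon)$-approximate dual solution, i.e. $\max_{x\in\mathbb{B}}\bar p^\top Ax\le\sigma+O(\epsilon)$ where $\sigma=\max_{x\in\mathbb{B}}\min_i A_ix=\min_{p\in\Delta}\max_{x\in\mathbb{B}}p^\top Ax$ and $\Delta$ is the unit simplex in $\mathbb{R}^n$.
   Context: $e_i$ is the $i$-th standard basis vector of $\mathbb{R}^n$. For $z,V\in\mathbb{R}$, $\mathrm{clip}(z,V)=\min\{V,\max\{-V,z\}\}$. Sublinear Perceptron: Input $\epsilon>0$ and $A$. Set $T=200^2\epsilon^{-2}\log n$, $y_1=0$, $w_1=\mathbf{1}_n$, $\eta=\frac{1}{100}\sqrt{\log n/T}$. For $t=1,\dots,T$: set $p_t=w_t/\|w_t\|_1$ and $x_t=y_t/\max\{1,\|y_t\|\}$; choose $i_t\in[n]$ with $\Pr[i_t=i]=p_t(i)$; set $y_{t+1}=y_t+\frac{1}{\sqrt{2T}}A_{i_t}$; choose $j_t\in[d]$ with $\Pr[j_t=j]=x_t(j)^2/\|x_t\|^2$; for each $i$ set $\tilde v_t(i)=A_i(j_t)\|x_t\|^2/x_t(j_t)$, $v_t(i)=\mathrm{clip}(\tilde v_t(i),1/\eta)$, and $w_{t+1}(i)=w_t(i)(1-\eta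 v_t(i)+\eta^2v_t(i)^2)$. Output $\bar x=\frac1T\sum_tx_t$. *)

theory Defs
  imports "HOL-Probability.Probability"
begin

text \<open>Vectors of R^d are functions nat => real, only components j < d matter.
  The matrix A is given by A i j = entry of row i (i < n), column j (j < d).\<close>

definition vnorm :: "nat \<Rightarrow> (nat \<Rightarrow> real) \<Rightarrow> real" where
  "vnorm d x = sqrt (\<Sum>j<d. (x j)^2)"

definition clip :: "real \<Rightarrow> real \<Rightarrow> real" where
  "clip z V = min V (max (- V) z)"

definition sp_T :: "nat \<Rightarrow> real \<Rightarrow> nat" where
  "sp_T n \<epsilon> = nat \<lceil>200^2 / \<epsilon>^2 * ln (real n)\<rceil>"

definition sp_eta :: "nat \<Rightarrow> real \<Rightarrow> real" where
  "sp_eta n \<epsilon> = 1/100 * sqrt (ln (real n) / real (sp_T n \<epsilon>))"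

text \<open>One iteration: from state (w_t, y_t) sample i_t and j_t, return i_t and (w_{t+1}, y_{t+1}).
  Convention: if x_t = 0 (e.g. t = 1), the distribution of j_t is undefined; then v_t = 0.\<close>
definition sp_step :: "nat \<Rightarrow> nat \<Rightarrow> (nat \<Rightarrow> nat \<Rightarrow> real) \<Rightarrow> real
    \<Rightarrow> (nat \<Rightarrow> real) \<times> (nat \<Rightarrow> real)
    \<Rightarrow> (nat \<times> ((nat \<Rightarrow> real) \<times> (nat \<Rightarrow> real))) pmf" where
  "sp_step n d A \<epsilon> s =
    (let w = fst s; y = snd s; T = sp_T n \<epsilon>; \<eta> = sp_eta n \<epsilon>;
         p = (\<lambda>i. w i / (\<Sum>k<n. w k));
         x = (\<lambda>j. y j / max 1 (vnorm d y))
     in bind_pmf (embed_pmf (\<lambda>i. if i < n then p i else 0)) (\<lambda>i.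
        bind_pmf (if vnorm d x = 0 then return_pmf 0
                  else embed_pmf (\<lambda>j. if j < d then (x j)^2 / (vnorm d x)^2 else 0)) (\<lambda>j.
        let v = (\<lambda>k. if vnorm d x = 0 then 0
                      else clip (A k j * (vnorm d x)^2 / x j) (1/\<eta>))
        in return_pmf (i, (\<lambda>k. w k * (1 - \<eta> * v k + \<eta>^2 * (v k)^2),
                           \<lambda>k. y k + 1 / sqrt (2 * real T) * A i k)))))"

fun sp_run :: "nat \<Rightarrow> nat \<Rightarrow> (nat \<Rightarrow> nat \<Rightarrow> real) \<Rightarrow> real \<Rightarrow> nat
    \<Rightarrow> (((nat \<Rightarrow> real) \<times> (nat \<Rightarrow> real)) \<times> nat list) pmf" where
  "sp_run n d A \<epsilon> 0 = return_pmf ((\<lambda>_. 1, \<lambda>_. 0), [])"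
| "sp_run n d A \<epsilon> (Suc t) =
     bind_pmf (sp_run n d A \<epsilon> t)
       (\<lambda>(s, is). map_pmf (\<lambda>(i, s'). (s', is @ [i])) (sp_step n d A \<epsilon> s))"

definition pbar :: "nat \<Rightarrow> nat list \<Rightarrow> nat \<Rightarrow> real" where
  "pbar T is i = real (count_list is i) / real T"

definition dual_val :: "nat \<Rightarrow> nat \<Rightarrow> (nat \<Rightarrow> nat \<Rightarrow> real) \<Rightarrow> (nat \<Rightarrow> real) \<Rightarrow> real" where
  "dual_val n d A p = Sup {(\<Sum>i<n. p i * (\<Sum>j<d. A i j * x j)) | x. vnorm d x \<le> 1}"

definition sigma :: "nat \<Rightarrow> nat \<Rightarrow> (nat \<Rightarrow> nat \<Rightarrow> real) \<Rightarrow> real" where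
  "sigma n d A = Sup {Min ((\<lambda>i. \<Sum>j<d. A i j * x j) ` {..<n}) | x. vnorm d x \<le> 1}"

end

theory Submission
  imports Defs
begin

text \<open>
  Let G = sum_t A_(i_t). Then T * dual_val pbar <= ||G|| and T * sigma <= ||G||, so by Markov's
  inequality it suffices to show E[||G|| - T sigma] <= 2 eps T. The y-iterates are lazy projected
  gradient ascent on the unit ball: the smooth potential Phi(y) = max_(||x|| <= 1) (y.x - ||x||^2/2)
  gives ||G|| <= sum_t A_(i_t) x_t + O(sqrt T). Averaged over i_t, A_(i_t) x_t becomes p_t.A x_t,
  which is within eta of p_t.v_t because v_t is a clipped unbiased estimator of A x_t with second
  moment at most 1. The regret bound of multiplicative weights compares sum_t p_t.v_t with
  sum_t v_t(k) for every row k, and the supermartingale sum_k exp(kappa sum_t (v_t(k) - A_k x_t))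
  bounds E max_k sum_t (v_t(k) - A_k x_t). Finally the row k minimising A_k xbar has
  sum_t A_k x_t = T A_k xbar <= T sigma.
\<close>

section \<open>Vectors with coordinates below d\<close>

definition dot :: "nat \<Rightarrow> (nat \<Rightarrow> real) \<Rightarrow> (nat \<Rightarrow> real) \<Rightarrow> real" where
  "dot d x y = (\<Sum>j<d. x j * y j)"

lemma vnorm_eq_L2_set: "vnorm d x = L2_set x {..<d}"
  by (simp add: vnorm_def L2_set_def)

lemma vnorm_nonneg [simp]: "0 \<le> vnorm d x"
  by (simp add: vnorm_def sum_nonneg)

lemma vnorm_power2: "(vnorm d x)^2 = (\<Sum>j<d. (x j)^2)"
  by (simp add: vnorm_def sum_nonneg)

lemma vnorm_eq_0_iff: "vnorm d x = 0 \<longleftrightarrow> (\<forall>j<d. x j = 0)"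
  by (auto simp add: vnorm_def sum_nonneg_eq_0_iff)

lemma vnorm_zero [simp]: "vnorm d (\<lambda>_. 0) = 0"
  by (simp add: vnorm_def)

lemma dot_self: "dot d y y = (vnorm d y)^2"
  unfolding vnorm_power2 by (simp add: dot_def power2_eq_square)

lemma abs_dot_le: "\<bar>dot d x y\<bar> \<le> vnorm d x * vnorm d y"
proof -
  have "\<bar>dot d x y\<bar> \<le> (\<Sum>j<d. \<bar>x j\<bar> * \<bar>y j\<bar>)"
    unfolding dot_def by (rule order.trans[OF sum_abs]) (simp add: abs_mult)
  also have "\<dots> \<le> vnorm d x * vnorm d y"
    unfolding vnorm_eq_L2_set by (rule L2_set_mult_ineq)
  finally show ?thesis .
qed

lemma dot_le: "dot d x y \<le> vnorm d x * vnorm d y"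
  using abs_dot_le[of d x y] by linarith

lemma dot_le_vnorm: "vnorm d x \<le> 1 \<Longrightarrow> dot d y x \<le> vnorm d y"
  using dot_le[of d y x] mult_left_le[of "vnorm d x" "vnorm d y"] by simp

lemma abs_dot_le_1: "vnorm d x \<le> 1 \<Longrightarrow> vnorm d y \<le> 1 \<Longrightarrow> \<bar>dot d x y\<bar> \<le> 1"
  using abs_dot_le[of d x y] mult_mono[of "vnorm d x" 1 "vnorm d y" 1] by simp

lemma vnorm_scale: "vnorm d (\<lambda>j. c * x j) = \<bar>c\<bar> * vnorm d x"
proof -
  have "(\<Sum>j<d. (c * x j)^2) = c^2 * (\<Sum>j<d. (x j)^2)"
    by (simp add: power_mult_distrib sum_distrib_left)
  thus ?thesis by (simp add: vnorm_def real_sqrt_mult)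
qed

lemma vnorm_divide: "vnorm d (\<lambda>j. x j / c) = vnorm d x / \<bar>c\<bar>"
  using vnorm_scale[of d "1/c" x] by (simp add: divide_inverse mult.commute abs_inverse)

lemma vnorm_add_le: "vnorm d (\<lambda>j. x j + y j) \<le> vnorm d x + vnorm d y"
  unfolding vnorm_eq_L2_set by (rule L2_set_triangle_ineq)

definition row_sum :: "(nat \<Rightarrow> nat \<Rightarrow> real) \<Rightarrow> nat list \<Rightarrow> nat \<Rightarrow> real" where
  "row_sum A is = (\<lambda>k. sum_list (map (\<lambda>i. A i k) is))"

lemma sum_list_dot_row_sum: "sum_list (map (\<lambda>i. dot d (A i) x) is) = dot d (row_sum A is) x"
  by (induction "is") (auto simp: row_sum_def dot_def sum.distrib algebra_simps)

lemma sum_count_list_mult: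
  fixes f :: "nat \<Rightarrow> real"
  assumes "set xs \<subseteq> {..<n}"
  shows "(\<Sum>i<n. real (count_list xs i) * f i) = sum_list (map f xs)"
  using assms
proof (induction xs)
  case (Cons a xs)
  have "(\<Sum>i<n. real (count_list (a # xs) i) * f i)
          = (\<Sum>i<n. (if a = i then f i else 0) + real (count_list xs i) * f i)"
    by (intro sum.cong refl) (simp add: algebra_simps)
  also have "\<dots> = f a + sum_list (map f xs)" using Cons by (simp add: sum.distrib)
  finally show ?case by simp
qed simp

lemma dual_val_pbar_le:
  assumes "set is \<subseteq> {..<n}"
  shows "dual_val n d A (pbar T is) \<le> vnorm d (row_sum A is) / T"
  unfolding dual_val_def
proof (rule cSup_least)
  show "{\<Sum>i<n. pbar T is i * (\<Sum>j<d. A i j * x j) |x. vnorm d x \<le> 1} \<noteq> {}"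
    by (auto intro!: exI[where x = "\<lambda>_. 0"])
next
  fix z assume "z \<in> {\<Sum>i<n. pbar T is i * (\<Sum>j<d. A i j * x j) |x. vnorm d x \<le> 1}"
  then obtain x where x: "vnorm d x \<le> 1" and z: "z = (\<Sum>i<n. pbar T is i * dot d (A i) x)"
    by (auto simp: dot_def)
  have "z = (\<Sum>i<n. real (count_list is i) * dot d (A i) x) / T"
    unfolding z pbar_def by (simp add: sum_divide_distrib)
  also have "\<dots> = sum_list (map (\<lambda>i. dot d (A i) x) is) / T"
    using sum_count_list_mult[OF assms] by simp
  also have "\<dots> = dot d (row_sum A is) x / T" by (simp only: sum_list_dot_row_sum)
  also have "\<dots> \<le> vnorm d (row_sum A is) / T"
    by (intro divide_right_mono dot_le_vnorm[OF x]) simp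
  finally show "z \<le> vnorm d (row_sum A is) / T" .
qed

lemma length_mult_sigma_le:
  assumes "set is \<subseteq> {..<n}" and "is \<noteq> []"
  shows "length is * sigma n d A \<le> vnorm d (row_sum A is)"
proof -
  have "sigma n d A \<le> vnorm d (row_sum A is) / length is"
    unfolding sigma_def
  proof (rule cSup_least)
    show "{Min ((\<lambda>i. \<Sum>j<d. A i j * x j) ` {..<n}) | x. vnorm d x \<le> 1} \<noteq> {}"
      by (auto intro!: exI[where x = "\<lambda>_. 0"])
  next
    fix z assume "z \<in> {Min ((\<lambda>i. \<Sum>j<d. A i j * x j) ` {..<n}) | x. vnorm d x \<le> 1}"
    then obtain x where x: "vnorm d x \<le> 1" and z: "z = Min ((\<lambda>i. dot d (A i) x) ` {..<n})"
      by (auto simp: dot_def)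
    have "length is * z = sum_list (map (\<lambda>i. z) is)" by (simp add: sum_list_triv)
    also have "\<dots> \<le> sum_list (map (\<lambda>i. dot d (A i) x) is)"
      by (rule sum_list_mono) (use assms(1) in \<open>auto simp: z intro!: Min_le\<close>)
    also have "\<dots> \<le> vnorm d (row_sum A is)"
      unfolding sum_list_dot_row_sum by (rule dot_le_vnorm[OF x])
    finally show "z \<le> vnorm d (row_sum A is) / length is"
      using assms(2) by (simp add: le_divide_eq mult.commute)
  qed
  thus ?thesis using assms(2) by (simp add: le_divide_eq mult.commute)
qed

definition ball_proj :: "nat \<Rightarrow> (nat \<Rightarrow> real) \<Rightarrow> nat \<Rightarrow> real" where
  "ball_proj d y = (\<lambda>j. y j / max 1 (vnorm d y))"

lemma vnorm_ball_proj_le: "vnorm d (ball_proj d y) \<le> 1"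
  by (simp add: ball_proj_def vnorm_divide divide_le_eq)

lemma ball_proj_inside: "vnorm d y \<le> 1 \<Longrightarrow> ball_proj d y = y"
  by (simp add: ball_proj_def max_def)

lemma ball_proj_outside: "vnorm d y > 1 \<Longrightarrow> ball_proj d y = (\<lambda>j. y j / vnorm d y)"
  by (simp add: ball_proj_def max_def)

lemma ball_proj_obtuse:
  assumes u: "vnorm d u \<le> 1"
  shows "dot d (\<lambda>j. y j - ball_proj d y j) (\<lambda>j. u j - ball_proj d y j) \<le> 0"
proof (cases "vnorm d y \<le> 1")
  case True thus ?thesis by (simp add: ball_proj_inside dot_def)
next
  case False
  define r where "r = vnorm d y"
  have r: "r > 1" using False r_def by simp
  have "dot d (\<lambda>j. y j - ball_proj d y j) (\<lambda>j. u j - ball_proj d y j)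
      = (\<Sum>j<d. (1 - 1/r) * (y j * u j) - (1 - 1/r) * ((y j)^2 / r))"
    unfolding dot_def using r r_def
    by (intro sum.cong refl) (simp add: ball_proj_outside field_simps power2_eq_square)
  also have "\<dots> = (1 - 1/r) * (dot d y u - r^2 / r)"
    by (simp add: sum_subtractf sum_distrib_left[symmetric] sum_divide_distrib[symmetric]
                  dot_def right_diff_distrib r_def vnorm_power2)
  also have "\<dots> \<le> 0"
  proof -
    have "dot d y u \<le> r"
      using dot_le[of d y u] mult_left_le[OF u vnorm_nonneg[of d y]] r_def by linarith
    moreover have "r^2 / r = r" using r by (simp add: power2_eq_square)
    moreover have "1 - 1/r \<ge> 0" using r by simp
    ultimately show ?thesis by (simp add: mult_nonneg_nonpos)
  qed
  finally show ?thesis .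
qed

text \<open>The maximum of y.x - ||x||^2/2 over the unit ball, attained at x = ball_proj d y. It is
  1-smooth with gradient ball_proj d y, which is what makes lazy projected gradient ascent work.\<close>
definition ball_potential :: "nat \<Rightarrow> (nat \<Rightarrow> real) \<Rightarrow> real" where
  "ball_potential d y = dot d y (ball_proj d y) - (vnorm d (ball_proj d y))^2 / 2"

lemma ball_potential_zero [simp]: "ball_potential d (\<lambda>_. 0) = 0"
  by (simp add: ball_potential_def dot_def ball_proj_def)

lemma vnorm_le_ball_potential: "vnorm d y - 1/2 \<le> ball_potential d y"
proof (cases "vnorm d y \<le> 1")
  case True
  hence "ball_potential d y = (vnorm d y)^2 / 2"
    by (simp add: ball_potential_def ball_proj_inside dot_self)
  moreover have "0 \<le> (vnorm d y - 1)^2" by simp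
  ultimately show ?thesis by (simp add: power2_eq_square algebra_simps)
next
  case False
  hence r: "vnorm d y > 1" by simp
  have "dot d y (ball_proj d y) = dot d y y / vnorm d y"
    using r by (simp add: ball_proj_outside dot_def sum_divide_distrib)
  also have "\<dots> = vnorm d y" using r by (simp add: dot_self power2_eq_square)
  finally have 1: "dot d y (ball_proj d y) = vnorm d y" .
  have 2: "vnorm d (ball_proj d y) = 1" using r by (simp add: ball_proj_outside vnorm_divide)
  show ?thesis unfolding ball_potential_def 1 2 by simp
qed

lemma ball_potential_add_le:
  "ball_potential d (\<lambda>j. y j + h j) \<le> ball_potential d y + dot d h (ball_proj d y) + (vnorm d h)^2 / 2"
proof -
  define x where "x = ball_proj d y"
  define x' where "x' = ball_proj d (\<lambda>j. y j + h j)"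
  define gap where "gap j = ((y j + h j) * x' j - (x' j)^2/2) - (y j * x j - (x j)^2/2)
                              - h j * x j - (h j)^2/2" for j
  have "gap j = (y j - x j) * (x' j - x j) - (h j - (x' j - x j))^2 / 2" for j
    by (simp add: gap_def power2_eq_square field_simps)
  hence "(\<Sum>j<d. gap j) \<le> dot d (\<lambda>j. y j - x j) (\<lambda>j. x' j - x j)"
    unfolding dot_def by (intro sum_mono) simp
  also have "\<dots> \<le> 0"
    unfolding x_def by (rule ball_proj_obtuse) (simp add: x'_def vnorm_ball_proj_le)
  finally have "(\<Sum>j<d. gap j) \<le> 0" .
  moreover have "(\<Sum>j<d. gap j) = ball_potential d (\<lambda>j. y j + h j) - ball_potential d y
                                    - dot d h (ball_proj d y) - (vnorm d h)^2 / 2"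
    unfolding gap_def ball_potential_def x_def[symmetric] x'_def[symmetric] dot_def vnorm_power2
    by (simp add: sum_subtractf sum_divide_distrib)
  ultimately show ?thesis by simp
qed

lemma exp_le_1_plus_plus_square:
  fixes z :: real assumes "z \<le> 1" shows "exp z \<le> 1 + z + z^2"
proof (cases "z \<ge> 0")
  case True thus ?thesis using exp_bound assms by blast
next
  case False
  show ?thesis
  proof (cases "z \<ge> -1")
    case True
    have "1 - z \<le> exp (-z)" using exp_ge_add_one_self[of "-z"] by simp
    hence "exp z \<le> 1 / (1 - z)" using False by (simp add: exp_minus field_simps)
    also have "\<dots> \<le> 1 + z + z^2"
    proof -
      have "(1 - z) * (1 + z + z^2) = 1 - z * z^2"
        by (simp add: algebra_simps power2_eq_square)
      moreover have "z * z^2 \<le> 0" using False by (simp add: mult_nonpos_nonneg)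
      ultimately show ?thesis using False by (simp add: divide_le_eq mult.commute)
    qed
    finally show ?thesis .
  next
    case below: False
    have "0 \<le> z * (1 + z)" using below by (intro mult_nonpos_nonpos) auto
    hence "0 \<le> z + z^2" by (simp add: algebra_simps power2_eq_square)
    moreover have "exp z \<le> 1" using False by simp
    ultimately show ?thesis by linarith
  qed
qed

lemma ln_2_ge_half: "1/2 \<le> ln (2::real)"
proof -
  have "exp (1/2::real) \<le> 1 + 1/2 + (1/2)^2" by (rule exp_bound) auto
  also have "\<dots> \<le> 2" by (simp add: power2_eq_square)
  finally show ?thesis by (subst ln_ge_iff) auto
qed

lemma abs_clip_le_bound: "V > 0 \<Longrightarrow> \<bar>clip z V\<bar> \<le> V"
  by (simp add: clip_def)

lemma abs_clip_le_abs: "V > 0 \<Longrightarrow> \<bar>clip z V\<bar> \<le> \<bar>z\<bar>"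
  by (simp add: clip_def)

lemma abs_clip_diff_le: assumes "V > 0" shows "\<bar>clip z V - z\<bar> \<le> z^2 / V"
proof (cases "\<bar>z\<bar> \<le> V")
  case True thus ?thesis using assms by (simp add: clip_def)
next
  case False
  hence "\<bar>clip z V - z\<bar> \<le> \<bar>z\<bar>" using assms by (auto simp: clip_def)
  also have "\<bar>z\<bar> * V \<le> \<bar>z\<bar> * \<bar>z\<bar>" using False by (intro mult_left_mono) auto
  hence "\<bar>z\<bar> \<le> z^2 / V" using assms by (simp add: le_divide_eq power2_eq_square)
  finally show ?thesis .
qed

lemma abs_sum_clip_diff_le:
  assumes "V > 0" and "\<And>j. 0 \<le> p j"
  shows "\<bar>(\<Sum>j\<in>S. p j * clip (u j) V) - (\<Sum>j\<in>S. p j * u j)\<bar> \<le> (\<Sum>j\<in>S. p j * (u j)^2) / V"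
proof -
  have "\<bar>(\<Sum>j\<in>S. p j * clip (u j) V) - (\<Sum>j\<in>S. p j * u j)\<bar> \<le> (\<Sum>j\<in>S. \<bar>p j * (clip (u j) V - u j)\<bar>)"
    by (simp add: sum_subtractf[symmetric] right_diff_distrib sum_abs)
  also have "\<dots> \<le> (\<Sum>j\<in>S. p j * ((u j)^2 / V))"
    using assms abs_clip_diff_le[OF assms(1)]
    by (intro sum_mono) (simp add: abs_mult mult_left_mono flip: times_divide_eq_right)
  finally show ?thesis by (simp add: sum_divide_distrib)
qed

lemma sum_clip_power2_le:
  assumes "V > 0" and "\<And>j. 0 \<le> p j"
  shows "(\<Sum>j\<in>S. p j * (clip (u j) V)^2) \<le> (\<Sum>j\<in>S. p j * (u j)^2)"
  using assms abs_clip_le_abs[OF assms(1)]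
  by (intro sum_mono mult_left_mono) (auto simp: abs_le_square_iff)

section \<open>Expectations under finitely supported distributions\<close>

lemma embed_pmf_finite_support:
  fixes f :: "'a \<Rightarrow> real"
  assumes nonneg: "\<And>x. 0 \<le> f x" and S: "finite S" and outside: "\<And>x. x \<notin> S \<Longrightarrow> f x = 0"
    and sum_1: "(\<Sum>x\<in>S. f x) = 1"
  shows "pmf (embed_pmf f) = f" and "set_pmf (embed_pmf f) \<subseteq> S"
    and "measure_pmf.expectation (embed_pmf f) g = (\<Sum>x\<in>S. f x * g x)"
proof -
  have "(\<integral>\<^sup>+x. ennreal (f x) \<partial>count_space UNIV) = (\<Sum>x\<in>S. ennreal (f x))"
    using S outside by (intro nn_integral_count_space') auto
  also have "\<dots> = 1" using nonneg sum_1 by (simp add: sum_ennreal)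
  finally have prob: "(\<integral>\<^sup>+x. ennreal (f x) \<partial>count_space UNIV) = 1" .
  show pmf: "pmf (embed_pmf f) = f" using pmf_embed_pmf[OF nonneg prob] by auto
  show set: "set_pmf (embed_pmf f) \<subseteq> S" using set_embed_pmf[OF nonneg prob] outside by auto
  show "measure_pmf.expectation (embed_pmf f) g = (\<Sum>x\<in>S. f x * g x)"
    using set by (subst integral_measure_pmf[OF S]) (auto simp: pmf)
qed

context
  fixes p :: "'a pmf"
  assumes fin: "finite (set_pmf p)"
begin

lemma expectation_finite_pmf:
  "measure_pmf.expectation p f = (\<Sum>a\<in>set_pmf p. pmf p a * f a)"
  by (subst integral_measure_pmf[OF fin]) auto

lemma expectation_bind_finite_pmf:
  assumes "\<And>a. a \<in> set_pmf p \<Longrightarrow> finite (set_pmf (q a))"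
  shows "measure_pmf.expectation (bind_pmf p q) (h :: _ \<Rightarrow> real)
           = measure_pmf.expectation p (\<lambda>a. measure_pmf.expectation (q a) h)"
  using pmf_expectation_bind[OF fin, of q p h] assms by (simp add: expectation_finite_pmf)

lemma expectation_mono_finite_pmf:
  assumes "\<And>a. a \<in> set_pmf p \<Longrightarrow> f a \<le> (g a :: real)"
  shows "measure_pmf.expectation p f \<le> measure_pmf.expectation p g"
  using assms by (simp add: expectation_finite_pmf sum_mono mult_left_mono)

lemma expectation_add_finite_pmf:
  "measure_pmf.expectation p (\<lambda>a. f a + g a)
     = measure_pmf.expectation p f + measure_pmf.expectation p (g :: _ \<Rightarrow> real)"
  by (simp add: expectation_finite_pmf sum.distrib algebra_simps)

lemma expectation_diff_finite_pmf:
  "measure_pmf.expectation p (\<lambda>a. f a - g a)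
     = measure_pmf.expectation p f - measure_pmf.expectation p (g :: _ \<Rightarrow> real)"
  by (simp add: expectation_finite_pmf sum_subtractf algebra_simps)

lemma expectation_sum_finite_pmf:
  "measure_pmf.expectation p (\<lambda>a. \<Sum>k\<in>K. f k a)
     = (\<Sum>k\<in>K. measure_pmf.expectation p (f k) :: real)"
  by (simp add: expectation_finite_pmf sum_distrib_left sum.swap[of _ K])

lemma prob_ge_half_by_Markov:
  fixes Z :: "'a \<Rightarrow> real"
  assumes c: "c > 0"
    and nonneg: "\<And>a. a \<in> set_pmf p \<Longrightarrow> 0 \<le> Z a"
    and expectation: "measure_pmf.expectation p Z \<le> c / 2"
    and good: "\<And>a. a \<in> set_pmf p \<Longrightarrow> Z a < c \<Longrightarrow> a \<in> E"
  shows "measure_pmf.prob p E \<ge> 1/2"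
proof -
  define bad where "bad = {a \<in> space (measure_pmf p). c \<le> Z a}"
  have "measure_pmf.prob p bad \<le> measure_pmf.expectation p Z / c"
    unfolding bad_def
  proof (rule integral_Markov_inequality_measure[OF _ _ _ c])
    show "integrable (measure_pmf p) Z" by (rule integrable_measure_pmf_finite[OF fin])
    show "AE a in measure_pmf p. 0 \<le> Z a" using nonneg by (simp add: AE_measure_pmf_iff)
  qed simp
  also have "\<dots> \<le> 1/2" using expectation c by (simp add: divide_le_eq)
  finally have bad_le: "measure_pmf.prob p bad \<le> 1/2" .
  have "1 - measure_pmf.prob p bad = measure_pmf.prob p (space (measure_pmf p) - bad)"
    by (rule measure_pmf.prob_compl[symmetric]) simp
  also have "\<dots> = measure_pmf.prob p ((space (measure_pmf p) - bad) \<inter> set_pmf p)"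
    by (rule measure_Int_set_pmf[symmetric])
  also have "\<dots> \<le> measure_pmf.prob p E"
    by (rule measure_pmf.finite_measure_mono) (auto simp: bad_def intro: good)
  finally show ?thesis using bad_le by linarith
qed

end

context
  fixes run :: "nat \<Rightarrow> 'a pmf" and step :: "'a \<Rightarrow> 'a pmf"
  assumes run_Suc: "\<And>t. run (Suc t) = bind_pmf (run t) step"
    and finite_run: "\<And>t. finite (set_pmf (run t))"
    and finite_step: "\<And>t a. a \<in> set_pmf (run t) \<Longrightarrow> finite (set_pmf (step a))"
begin

lemma expectation_run_Suc:
  "measure_pmf.expectation (run (Suc t)) F
     = measure_pmf.expectation (run t) (\<lambda>a. measure_pmf.expectation (step a) (F :: _ \<Rightarrow> real))"
  unfolding run_Suc by (rule expectation_bind_finite_pmf[OF finite_run finite_step])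

lemma expectation_run_additive_drift:
  fixes F :: "'a \<Rightarrow> real"
  assumes drift: "\<And>t a. a \<in> set_pmf (run t) \<Longrightarrow> measure_pmf.expectation (step a) F \<le> F a + c"
  shows "measure_pmf.expectation (run t) F \<le> measure_pmf.expectation (run 0) F + t * c"
proof (induction t)
  case 0 thus ?case by simp
next
  case (Suc t)
  have "measure_pmf.expectation (run (Suc t)) F \<le> measure_pmf.expectation (run t) (\<lambda>a. F a + c)"
    unfolding expectation_run_Suc by (rule expectation_mono_finite_pmf[OF finite_run drift])
  also have "\<dots> = measure_pmf.expectation (run t) F + c"
    by (simp add: expectation_add_finite_pmf[OF finite_run])
  finally show ?case using Suc.IH by (simp add: algebra_simps)
qed

lemma expectation_run_multiplicative_drift:
  fixes F :: "'a \<Rightarrow> real"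
  assumes drift: "\<And>t a. a \<in> set_pmf (run t) \<Longrightarrow> measure_pmf.expectation (step a) F \<le> q * F a"
    and q: "q \<ge> 0"
  shows "measure_pmf.expectation (run t) F \<le> q ^ t * measure_pmf.expectation (run 0) F"
proof (induction t)
  case 0 thus ?case by simp
next
  case (Suc t)
  have "measure_pmf.expectation (run (Suc t)) F \<le> measure_pmf.expectation (run t) (\<lambda>a. q * F a)"
    unfolding expectation_run_Suc by (rule expectation_mono_finite_pmf[OF finite_run drift])
  also have "\<dots> \<le> q * (q ^ t * measure_pmf.expectation (run 0) F)"
    using Suc.IH q by (simp add: mult_left_mono)
  finally show ?case by (simp add: algebra_simps)
qed

end

section \<open>The algorithm and its augmented run\<close>

text \<open>The state (w_(t+1), y_(t+1), [i_1, ..., i_t]) of the algorithm after t steps together with the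
  running sums of the analysis: sum_s x_s, the vector sum_s v_s, sum_s A_(i_s) x_s, sum_s p_s.v_s
  and sum_s p_s.v_s^2, all over s <= t.\<close>
datatype sp_state = SP_State
  (weights: "nat \<Rightarrow> real") (yvec: "nat \<Rightarrow> real") (indices: "nat list")
  (xsum: "nat \<Rightarrow> real") (vsum: "nat \<Rightarrow> real") (gain: real) (mw_loss: real) (mw_loss2: real)

locale sublinear_perceptron =
  fixes n d :: nat and A :: "nat \<Rightarrow> nat \<Rightarrow> real" and \<epsilon> :: real
  assumes n_ge_2: "n \<ge> 2" and eps_pos: "\<epsilon> > 0"
    and vnorm_row_le: "\<And>i. i < n \<Longrightarrow> vnorm d (A i) \<le> 1"
begin

definition "T = sp_T n \<epsilon>"
definition "\<eta> = sp_eta n \<epsilon>"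
definition "ystep = 1 / sqrt (2 * real T)"

definition wsum :: "(nat \<Rightarrow> real) \<Rightarrow> real" where "wsum w = (\<Sum>k<n. w k)"
definition wprob :: "(nat \<Rightarrow> real) \<Rightarrow> nat \<Rightarrow> real" where "wprob w i = w i / wsum w"
definition "row_dist w = embed_pmf (\<lambda>i. if i < n then wprob w i else 0)"
definition "coord_dist x = (if vnorm d x = 0 then return_pmf 0
     else embed_pmf (\<lambda>j. if j < d then (x j)^2 / (vnorm d x)^2 else 0))"
definition "v_est x j k = (if vnorm d x = 0 then 0 else clip (A k j * (vnorm d x)^2 / x j) (1/\<eta>))"
definition "mw_update w x j = (\<lambda>k. w k * (1 - \<eta> * v_est x j k + \<eta>^2 * (v_est x j k)^2))"
definition "y_update y i = (\<lambda>k. y k + ystep * A i k)"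

lemma sp_step_eq: "sp_step n d A \<epsilon> s =
    bind_pmf (row_dist (fst s)) (\<lambda>i. bind_pmf (coord_dist (ball_proj d (snd s))) (\<lambda>j.
      return_pmf (i, (mw_update (fst s) (ball_proj d (snd s)) j, y_update (snd s) i))))"
  unfolding sp_step_def Let_def row_dist_def coord_dist_def mw_update_def y_update_def v_est_def
    wprob_def wsum_def ball_proj_def ystep_def T_def \<eta>_def
  by simp

definition "aug_update a i j = (let w = weights a; y = yvec a; x = ball_proj d y in
   SP_State (mw_update w x j) (y_update y i) (indices a @ [i]) (\<lambda>k. xsum a k + x k)
     (\<lambda>k. vsum a k + v_est x j k) (gain a + dot d (A i) x)
     (mw_loss a + (\<Sum>k<n. wprob w k * v_est x j k))
     (mw_loss2 a + (\<Sum>k<n. wprob w k * (v_est x j k)^2)))"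

definition "aug_step a = bind_pmf (row_dist (weights a)) (\<lambda>i.
   bind_pmf (coord_dist (ball_proj d (yvec a))) (\<lambda>j. return_pmf (aug_update a i j)))"

abbreviation "aug_init \<equiv> SP_State (\<lambda>_. 1) (\<lambda>_. 0) [] (\<lambda>_. 0) (\<lambda>_. 0) 0 0 0"

primrec aug_run :: "nat \<Rightarrow> sp_state pmf" where
  "aug_run 0 = return_pmf aug_init"
| "aug_run (Suc t) = bind_pmf (aug_run t) aug_step"

definition "forget a = ((weights a, yvec a), indices a)"

lemma map_forget_aug_run: "map_pmf forget (aug_run t) = sp_run n d A \<epsilon> t"
proof (induction t)
  case 0 thus ?case by (simp add: forget_def)
next
  case (Suc t)
  have "map_pmf forget (aug_run (Suc t)) = bind_pmf (aug_run t) (\<lambda>a. map_pmf forget (aug_step a))"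
    by (simp add: map_bind_pmf)
  also have "\<dots> = bind_pmf (aug_run t) (\<lambda>a. (\<lambda>(s, is). map_pmf (\<lambda>(i, s'). (s', is @ [i]))
                     (sp_step n d A \<epsilon> s)) (forget a))"
    by (intro bind_pmf_cong refl)
       (simp add: forget_def aug_step_def sp_step_eq map_bind_pmf aug_update_def Let_def)
  also have "\<dots> = sp_run n d A \<epsilon> (Suc t)"
    by (simp add: Suc.IH[symmetric] bind_map_pmf)
  finally show ?case .
qed

lemma ln_n_pos: "ln (real n) > 0"
  using n_ge_2 by simp

lemma T_ge: "real T \<ge> 200^2 / \<epsilon>^2 * ln (real n)"
proof -
  have "200^2 / \<epsilon>^2 * ln (real n) \<le> of_int \<lceil>200^2 / \<epsilon>^2 * ln (real n)\<rceil>"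
    by (rule le_of_int_ceiling)
  also have "\<dots> = real T"
    unfolding T_def sp_T_def using ln_n_pos eps_pos by (simp add: zero_le_mult_iff)
  finally show ?thesis .
qed

lemma T_pos: "T > 0"
proof -
  have "0 < 200^2 / \<epsilon>^2 * ln (real n)" using ln_n_pos eps_pos by simp
  with T_ge show ?thesis by linarith
qed

lemma eta_pos: "\<eta> > 0"
  unfolding \<eta>_def sp_eta_def T_def[symmetric] using T_pos ln_n_pos by simp

lemma ystep_pos: "ystep > 0"
  unfolding ystep_def using T_pos by simp

lemma abs_v_est_le: "\<bar>v_est x j k\<bar> \<le> 1/\<eta>"
  unfolding v_est_def using eta_pos abs_clip_le_bound[of "1/\<eta>"] by auto

lemma mw_factor_pos: "0 < 1 - \<eta> * v + \<eta>^2 * v^2"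
proof -
  have "1 - \<eta> * v + \<eta>^2 * v^2 = (\<eta> * v - 1/2)^2 + 3/4"
    by (simp add: power2_eq_square algebra_simps)
  moreover have "0 \<le> (\<eta> * v - 1/2)^2" by simp
  ultimately show ?thesis by linarith
qed

lemma exp_le_mw_factor: "\<bar>v\<bar> \<le> 1/\<eta> \<Longrightarrow> exp (- \<eta> * v) \<le> 1 - \<eta> * v + \<eta>^2 * v^2"
  using exp_le_1_plus_plus_square[of "- \<eta> * v"] eta_pos
  by (simp add: abs_le_iff field_simps power2_eq_square)

lemma wsum_pos: "(\<And>k. k < n \<Longrightarrow> w k > 0) \<Longrightarrow> wsum w > 0"
  unfolding wsum_def using n_ge_2 by (intro sum_pos) (auto simp: lessThan_empty_iff)

lemma wprob_sum:
  assumes "\<And>k. k < n \<Longrightarrow> w k > 0" shows "(\<Sum>k<n. wprob w k) = 1"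
proof -
  have "wsum w > 0" using assms by (rule wsum_pos)
  thus ?thesis by (simp add: wprob_def wsum_def flip: sum_divide_distrib)
qed

lemma wprob_nonneg: "(\<And>k. k < n \<Longrightarrow> w k > 0) \<Longrightarrow> i < n \<Longrightarrow> 0 \<le> wprob w i"
  using wsum_pos by (simp add: wprob_def less_imp_le)

lemma sum_wprob_le:
  assumes w: "\<And>k. k < n \<Longrightarrow> w k > 0" and f: "\<And>k. k < n \<Longrightarrow> f k \<le> c"
  shows "(\<Sum>k<n. wprob w k * f k) \<le> c"
proof -
  have "(\<Sum>k<n. wprob w k * f k) \<le> (\<Sum>k<n. wprob w k * c)"
    using f wprob_nonneg[of w, OF w] by (intro sum_mono mult_left_mono) auto
  thus ?thesis using wprob_sum[of w, OF w] by (simp flip: sum_distrib_right)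
qed

lemma sum_wprob_const_add:
  assumes w: "\<And>k. k < n \<Longrightarrow> w k > 0"
  shows "(\<Sum>k<n. wprob w k * (c + f k)) = c + (\<Sum>k<n. wprob w k * f k)"
  using wprob_sum[of w, OF w] by (simp add: distrib_left sum.distrib flip: sum_distrib_right)

lemma wsum_mult_wprob: "wsum w > 0 \<Longrightarrow> wsum w * (\<Sum>k<n. wprob w k * f k) = (\<Sum>k<n. w k * f k)"
  by (simp add: sum_distrib_left wprob_def)

lemma row_dist:
  assumes w: "\<And>k. k < n \<Longrightarrow> w k > 0"
  shows "set_pmf (row_dist w) \<subseteq> {..<n}"
    and "measure_pmf.expectation (row_dist w) g = (\<Sum>i<n. wprob w i * g i)"
proof -
  note embed = embed_pmf_finite_support[of "\<lambda>i. if i < n then wprob w i else 0" "{..<n}"]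
  have "\<And>i. 0 \<le> (if i < n then wprob w i else 0)" using wprob_nonneg[of w, OF w] by simp
  moreover have "(\<Sum>i<n. if i < n then wprob w i else 0) = 1" using wprob_sum[of w, OF w] by simp
  ultimately show "set_pmf (row_dist w) \<subseteq> {..<n}"
    and "measure_pmf.expectation (row_dist w) g = (\<Sum>i<n. wprob w i * g i)"
    unfolding row_dist_def using embed by auto
qed

lemma coord_dist:
  assumes "vnorm d x \<noteq> 0"
  shows "set_pmf (coord_dist x) \<subseteq> {..<d}"
    and "measure_pmf.expectation (coord_dist x) g = (\<Sum>j<d. (x j)^2 / (vnorm d x)^2 * g j)"
proof -
  note embed = embed_pmf_finite_support[of "\<lambda>j. if j < d then (x j)^2 / (vnorm d x)^2 else 0" "{..<d}"]
  have "(\<Sum>j<d. if j < d then (x j)^2 / (vnorm d x)^2 else 0) = 1"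
    using assms by (simp add: sum_divide_distrib[symmetric] vnorm_power2[symmetric])
  then show "set_pmf (coord_dist x) \<subseteq> {..<d}"
    and "measure_pmf.expectation (coord_dist x) g = (\<Sum>j<d. (x j)^2 / (vnorm d x)^2 * g j)"
    unfolding coord_dist_def using assms embed by auto
qed

lemma finite_coord_dist: "finite (set_pmf (coord_dist x))"
  using coord_dist(1)[of x] finite_subset by (cases "vnorm d x = 0") (auto simp: coord_dist_def)

text \<open>Sampling j with probability x_j^2/||x||^2 makes A_k(j) ||x||^2/x_j an unbiased estimator of
  A_k.x whose second moment is ||A_k||^2 ||x||^2; clipping at 1/eta costs a bias of eta times
  that second moment.\<close>
lemma v_est_moments:
  assumes k: "k < n" and x: "vnorm d x \<le> 1"
  shows "\<bar>measure_pmf.expectation (coord_dist x) (\<lambda>j. v_est x j k) - dot d (A k) x\<bar> \<le> \<eta>"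
    and "measure_pmf.expectation (coord_dist x) (\<lambda>j. (v_est x j k)^2) \<le> 1"
proof -
  consider "vnorm d x = 0" | "vnorm d x \<noteq> 0" by blast
  then have "\<bar>measure_pmf.expectation (coord_dist x) (\<lambda>j. v_est x j k) - dot d (A k) x\<bar> \<le> \<eta> \<and>
         measure_pmf.expectation (coord_dist x) (\<lambda>j. (v_est x j k)^2) \<le> 1"
  proof cases
    case 1
    hence "dot d (A k) x = 0" by (simp add: vnorm_eq_0_iff dot_def)
    thus ?thesis using 1 eta_pos by (simp add: coord_dist_def v_est_def)
  next
    case r0: 2
    define p where "p j = (x j)^2 / (vnorm d x)^2" for j
    define u where "u j = A k j * (vnorm d x)^2 / x j" for j
    have p_nonneg: "0 \<le> p j" for j by (simp add: p_def)
    have E_v: "measure_pmf.expectation (coord_dist x) (\<lambda>j. v_est x j k) = (\<Sum>j<d. p j * clip (u j) (1/\<eta>))"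
      and E_v2: "measure_pmf.expectation (coord_dist x) (\<lambda>j. (v_est x j k)^2)
                   = (\<Sum>j<d. p j * (clip (u j) (1/\<eta>))^2)"
      using r0 by (simp_all add: coord_dist v_est_def p_def u_def)
    have "p j * u j = A k j * x j" for j
      using r0 by (cases "x j = 0") (auto simp: p_def u_def field_simps power2_eq_square)
    hence dot_eq: "dot d (A k) x = (\<Sum>j<d. p j * u j)" by (simp add: dot_def)
    have "p j * (u j)^2 \<le> (A k j)^2 * (vnorm d x)^2" for j
      using r0 by (cases "x j = 0") (simp add: p_def, simp add: p_def u_def field_simps power2_eq_square)
    hence "(\<Sum>j<d. p j * (u j)^2) \<le> (\<Sum>j<d. (A k j)^2 * (vnorm d x)^2)" by (rule sum_mono)
    also have "\<dots> = (vnorm d (A k))^2 * (vnorm d x)^2" by (simp add: vnorm_power2 sum_distrib_right)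
    also have "\<dots> \<le> 1 * 1" using vnorm_row_le[OF k] x by (intro mult_mono power_le_one) auto
    finally have second_moment: "(\<Sum>j<d. p j * (u j)^2) \<le> 1" by simp
    have "\<bar>(\<Sum>j<d. p j * clip (u j) (1/\<eta>)) - (\<Sum>j<d. p j * u j)\<bar> \<le> \<eta> * (\<Sum>j<d. p j * (u j)^2)"
      using abs_sum_clip_diff_le[of "1/\<eta>" p u "{..<d}"] eta_pos p_nonneg by (simp add: mult.commute)
    also have "\<dots> \<le> \<eta>" using second_moment eta_pos by (simp add: mult_le_cancel_left1)
    finally have bias: "\<bar>(\<Sum>j<d. p j * clip (u j) (1/\<eta>)) - (\<Sum>j<d. p j * u j)\<bar> \<le> \<eta>" .
    have "(\<Sum>j<d. p j * (clip (u j) (1/\<eta>))^2) \<le> (\<Sum>j<d. p j * (u j)^2)"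
      using eta_pos p_nonneg by (intro sum_clip_power2_le) auto
    thus ?thesis using bias second_moment E_v E_v2 dot_eq by simp
  qed
  thus "\<bar>measure_pmf.expectation (coord_dist x) (\<lambda>j. v_est x j k) - dot d (A k) x\<bar> \<le> \<eta>"
    and "measure_pmf.expectation (coord_dist x) (\<lambda>j. (v_est x j k)^2) \<le> 1" by auto
qed

lemma wsum_mw_update_le:
  assumes w: "\<And>k. k < n \<Longrightarrow> w k > 0"
  shows "wsum (mw_update w x j) \<le> wsum w * exp (- \<eta> * (\<Sum>k<n. wprob w k * v_est x j k)
                                               + \<eta>^2 * (\<Sum>k<n. wprob w k * (v_est x j k)^2))"
proof -
  define D1 where "D1 = (\<Sum>k<n. wprob w k * v_est x j k)"
  define D2 where "D2 = (\<Sum>k<n. wprob w k * (v_est x j k)^2)"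
  have W: "wsum w > 0" using wsum_pos w by blast
  have "wsum (mw_update w x j) = wsum w * (\<Sum>k<n. wprob w k * (1 - \<eta> * v_est x j k + \<eta>^2 * (v_est x j k)^2))"
    by (simp add: wsum_mult_wprob[OF W]) (simp add: wsum_def mw_update_def)
  also have "(\<Sum>k<n. wprob w k * (1 - \<eta> * v_est x j k + \<eta>^2 * (v_est x j k)^2)) = 1 - \<eta> * D1 + \<eta>^2 * D2"
    using wprob_sum[of w, OF w]
    by (simp add: D1_def D2_def algebra_simps sum.distrib sum_subtractf sum_distrib_left)
  also have "wsum w * (1 - \<eta> * D1 + \<eta>^2 * D2) \<le> wsum w * exp (- \<eta> * D1 + \<eta>^2 * D2)"
    using W exp_ge_add_one_self[of "- \<eta> * D1 + \<eta>^2 * D2"] by (intro mult_left_mono) linarith+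
  finally show ?thesis by (simp add: D1_def D2_def)
qed

lemma exp_le_mw_update:
  assumes "exp (- \<eta> * V) \<le> w k"
  shows "exp (- \<eta> * (V + v_est x j k)) \<le> mw_update w x j k"
proof -
  have "exp (- \<eta> * (V + v_est x j k)) = exp (- \<eta> * V) * exp (- \<eta> * v_est x j k)"
    by (simp add: algebra_simps flip: exp_add)
  also have "\<dots> \<le> w k * (1 - \<eta> * v_est x j k + \<eta>^2 * (v_est x j k)^2)"
    using assms exp_le_mw_factor[OF abs_v_est_le]
    by (intro mult_mono) (auto intro: order.trans[OF exp_ge_zero])
  finally show ?thesis by (simp add: mw_update_def)
qed

lemma vnorm_ystep_row_le: "i < n \<Longrightarrow> vnorm d (\<lambda>k. ystep * A i k) \<le> ystep"
  using vnorm_row_le[of i] ystep_pos by (simp add: vnorm_scale mult_le_cancel_left1)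

lemma ball_potential_y_update_le:
  assumes i: "i < n"
  shows "ball_potential d (y_update y i)
           \<le> ball_potential d y + ystep * dot d (A i) (ball_proj d y) + ystep^2 / 2"
proof -
  have "ball_potential d (y_update y i) \<le> ball_potential d y
          + dot d (\<lambda>k. ystep * A i k) (ball_proj d y) + (vnorm d (\<lambda>k. ystep * A i k))^2 / 2"
    unfolding y_update_def by (rule ball_potential_add_le)
  also have "dot d (\<lambda>k. ystep * A i k) (ball_proj d y) = ystep * dot d (A i) (ball_proj d y)"
    by (simp add: dot_def sum_distrib_left algebra_simps)
  also have "(vnorm d (\<lambda>k. ystep * A i k))^2 \<le> ystep^2"
    using vnorm_ystep_row_le[OF i] by (intro power_mono) auto
  finally show ?thesis by simp
qed

lemma vnorm_y_update_le: "i < n \<Longrightarrow> vnorm d (y_update y i) \<le> vnorm d y + ystep"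
  using vnorm_add_le[of d y "\<lambda>k. ystep * A i k"] vnorm_ystep_row_le[of i]
  by (simp add: y_update_def)

text \<open>The deterministic facts about a run of length t: the first three lines are bookkeeping, the
  fourth is the potential form of the regret bound of lazy projected gradient ascent, and the last
  two lines bound the total weight of multiplicative weights from above and below.\<close>
definition run_inv :: "nat \<Rightarrow> sp_state \<Rightarrow> bool" where
  "run_inv t a \<longleftrightarrow> length (indices a) = t \<and> set (indices a) \<subseteq> {..<n} \<and> (\<forall>k. weights a k > 0) \<and>
     yvec a = (\<lambda>k. ystep * row_sum A (indices a) k) \<and>
     vnorm d (xsum a) \<le> t \<and> vnorm d (yvec a) \<le> t * ystep \<and>
     ball_potential d (yvec a) \<le> ystep * gain a + t * ystep^2 / 2 \<and>
     wsum (weights a) \<le> n * exp (- \<eta> * mw_loss a + \<eta>^2 * mw_loss2 a) \<and>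
     (\<forall>k<n. exp (- \<eta> * vsum a k) \<le> weights a k)"

lemma run_inv_init: "run_inv 0 aug_init"
  by (simp add: run_inv_def wsum_def row_sum_def)

lemma run_inv_aug_update:
  assumes inv: "run_inv t a" and i: "i < n"
  shows "run_inv (Suc t) (aug_update a i j)"
proof -
  define w where "w = weights a"
  define y where "y = yvec a"
  define x where "x = ball_proj d y"
  have w_pos: "\<And>k. w k > 0" using inv by (simp add: run_inv_def w_def)
  have x_le: "vnorm d x \<le> 1" unfolding x_def by (rule vnorm_ball_proj_le)
  have "mw_update w x j k > 0" for k
    using w_pos mw_factor_pos by (simp add: mw_update_def)
  moreover have "yvec (aug_update a i j) = (\<lambda>k. ystep * row_sum A (indices a @ [i]) k)"
    using inv by (simp add: aug_update_def Let_def run_inv_def y_update_def row_sum_def algebra_simps)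
  moreover have "vnorm d (\<lambda>k. xsum a k + x k) \<le> Suc t"
    using vnorm_add_le[of d "xsum a" x] inv x_le by (simp add: run_inv_def)
  moreover have "vnorm d (y_update y i) \<le> Suc t * ystep"
  proof -
    have "vnorm d y \<le> t * ystep" using inv unfolding run_inv_def y_def by blast
    thus ?thesis using vnorm_y_update_le[OF i, of y] by (simp add: algebra_simps)
  qed
  moreover have "ball_potential d (y_update y i) \<le> ystep * (gain a + dot d (A i) x) + Suc t * ystep^2 / 2"
  proof -
    have "ball_potential d y \<le> ystep * gain a + t * ystep^2 / 2"
      using inv unfolding run_inv_def y_def by blast
    thus ?thesis using ball_potential_y_update_le[OF i, of y]
      by (simp add: x_def algebra_simps add_divide_distrib)
  qed
  moreover have "wsum (mw_update w x j) \<le> n * exp (- \<eta> * (mw_loss a + (\<Sum>k<n. wprob w k * v_est x j k))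
                   + \<eta>^2 * (mw_loss2 a + (\<Sum>k<n. wprob w k * (v_est x j k)^2)))"
  proof -
    define L where "L = - \<eta> * (\<Sum>k<n. wprob w k * v_est x j k) + \<eta>^2 * (\<Sum>k<n. wprob w k * (v_est x j k)^2)"
    have "wsum (mw_update w x j) \<le> wsum w * exp L"
      unfolding L_def using w_pos by (rule wsum_mw_update_le)
    also have "\<dots> \<le> n * exp (- \<eta> * mw_loss a + \<eta>^2 * mw_loss2 a) * exp L"
      using inv by (intro mult_right_mono) (auto simp: run_inv_def w_def)
    finally show ?thesis by (simp add: L_def mult.assoc algebra_simps flip: exp_add)
  qed
  moreover have "\<forall>k<n. exp (- \<eta> * (vsum a k + v_est x j k)) \<le> mw_update w x j k"
    using inv exp_le_mw_update by (simp add: run_inv_def w_def)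
  ultimately show ?thesis
    using inv i by (simp add: run_inv_def aug_update_def Let_def w_def y_def x_def)
qed

lemma run_inv_weights_pos: "run_inv t a \<Longrightarrow> weights a k > 0"
  by (simp add: run_inv_def)

lemma set_pmf_row_dist_weights: "run_inv t a \<Longrightarrow> set_pmf (row_dist (weights a)) \<subseteq> {..<n}"
  by (rule row_dist(1)) (simp add: run_inv_weights_pos)

lemma set_pmf_aug_step:
  "run_inv t a \<Longrightarrow> set_pmf (aug_step a) \<subseteq> {aug_update a i j | i j. i < n}"
  using set_pmf_row_dist_weights by (fastforce simp: aug_step_def)

lemma finite_aug_step: "run_inv t a \<Longrightarrow> finite (set_pmf (aug_step a))"
  using set_pmf_row_dist_weights finite_subset
  by (fastforce simp: aug_step_def finite_coord_dist)

lemma run_inv_aug_run: "a \<in> set_pmf (aug_run t) \<Longrightarrow> run_inv t a"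
proof (induction t arbitrary: a)
  case 0 thus ?case using run_inv_init by simp
next
  case (Suc t)
  then obtain b where b: "b \<in> set_pmf (aug_run t)" and a: "a \<in> set_pmf (aug_step b)" by auto
  have "run_inv t b" using Suc.IH b .
  thus ?case using set_pmf_aug_step a run_inv_aug_update by blast
qed

lemma finite_aug_run: "finite (set_pmf (aug_run t))"
  by (induction t) (auto intro: finite_aug_step run_inv_aug_run)

lemma expectation_aug_run_additive_drift:
  fixes F :: "sp_state \<Rightarrow> real"
  assumes "\<And>t a. run_inv t a \<Longrightarrow> measure_pmf.expectation (aug_step a) F \<le> F a + c"
  shows "measure_pmf.expectation (aug_run t) F \<le> F aug_init + t * c"
proof -
  have "measure_pmf.expectation (aug_run t) F \<le> measure_pmf.expectation (aug_run 0) F + t * c"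
    by (rule expectation_run_additive_drift)
       (auto intro: finite_aug_run finite_aug_step run_inv_aug_run assms)
  thus ?thesis by simp
qed

lemma expectation_aug_run_multiplicative_drift:
  fixes F :: "sp_state \<Rightarrow> real"
  assumes "\<And>t a. run_inv t a \<Longrightarrow> measure_pmf.expectation (aug_step a) F \<le> q * F a" and "q \<ge> 0"
  shows "measure_pmf.expectation (aug_run t) F \<le> q ^ t * F aug_init"
proof -
  have "measure_pmf.expectation (aug_run t) F \<le> q ^ t * measure_pmf.expectation (aug_run 0) F"
    by (rule expectation_run_multiplicative_drift)
       (auto intro: finite_aug_run finite_aug_step run_inv_aug_run assms)
  thus ?thesis by simp
qed

lemma expectation_aug_step:
  assumes "run_inv t a"
  shows "measure_pmf.expectation (aug_step a) F = (\<Sum>i<n. wprob (weights a) i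
           * measure_pmf.expectation (coord_dist (ball_proj d (yvec a))) (\<lambda>j. F (aug_update a i j)))"
proof -
  have w: "\<And>k. k < n \<Longrightarrow> weights a k > 0" using assms by (simp add: run_inv_weights_pos)
  have "finite (set_pmf (row_dist (weights a)))"
    using set_pmf_row_dist_weights[OF assms] finite_subset by blast
  hence "measure_pmf.expectation (aug_step a) F = measure_pmf.expectation (row_dist (weights a))
      (\<lambda>i. measure_pmf.expectation (coord_dist (ball_proj d (yvec a))) (\<lambda>j. F (aug_update a i j)))"
    unfolding aug_step_def
    by (simp add: expectation_bind_finite_pmf finite_coord_dist)
  also have "\<dots> = (\<Sum>i<n. wprob (weights a) i
      * measure_pmf.expectation (coord_dist (ball_proj d (yvec a))) (\<lambda>j. F (aug_update a i j)))"
    by (rule row_dist(2)[OF w])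
  finally show ?thesis .
qed

section \<open>Expected drift of the regret quantities\<close>

definition "gain_minus_loss a = gain a - mw_loss a + \<eta> * mw_loss2 a"

lemma expectation_gain_minus_loss_step:
  assumes inv: "run_inv t a"
  shows "measure_pmf.expectation (aug_step a) gain_minus_loss \<le> gain_minus_loss a + 2 * \<eta>"
proof -
  define w where "w = weights a"
  define x where "x = ball_proj d (yvec a)"
  define Ev where "Ev k = measure_pmf.expectation (coord_dist x) (\<lambda>j. v_est x j k)" for k
  define Ev2 where "Ev2 k = measure_pmf.expectation (coord_dist x) (\<lambda>j. (v_est x j k)^2)" for k
  define M where "M = (\<Sum>k<n. wprob w k * Ev k) - \<eta> * (\<Sum>k<n. wprob w k * Ev2 k)"
  have w: "\<And>k. k < n \<Longrightarrow> w k > 0" using inv by (simp add: w_def run_inv_weights_pos)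
  have x_le: "vnorm d x \<le> 1" unfolding x_def by (rule vnorm_ball_proj_le)
  have inner: "measure_pmf.expectation (coord_dist x) (\<lambda>j. gain_minus_loss (aug_update a i j))
                 = (gain_minus_loss a - M) + dot d (A i) x" for i
  proof -
    have "(\<lambda>j. gain_minus_loss (aug_update a i j)) = (\<lambda>j. (gain_minus_loss a + dot d (A i) x)
            - ((\<Sum>k<n. wprob w k * v_est x j k) - \<eta> * (\<Sum>k<n. wprob w k * (v_est x j k)^2)))"
      by (simp add: fun_eq_iff gain_minus_loss_def aug_update_def Let_def w_def x_def algebra_simps)
    thus ?thesis
      by (simp add: expectation_diff_finite_pmf[OF finite_coord_dist]
                    expectation_sum_finite_pmf[OF finite_coord_dist] Ev_def Ev2_def M_def)
  qed
  have bias: "(\<Sum>k<n. wprob w k * (dot d (A k) x - Ev k)) \<le> \<eta>"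
    using v_est_moments(1)[OF _ x_le] by (intro sum_wprob_le[OF w]) (auto simp: Ev_def abs_le_iff)
  have second_moment: "(\<Sum>k<n. wprob w k * Ev2 k) \<le> 1"
    unfolding Ev2_def by (rule sum_wprob_le[OF w v_est_moments(2)[OF _ x_le]])
  have "measure_pmf.expectation (aug_step a) gain_minus_loss
          = (\<Sum>i<n. wprob w i * ((gain_minus_loss a - M) + dot d (A i) x))"
    using expectation_aug_step[OF inv] inner by (simp add: w_def x_def)
  also have "\<dots> = gain_minus_loss a - M + (\<Sum>i<n. wprob w i * dot d (A i) x)"
    by (rule sum_wprob_const_add[OF w])
  also have "\<dots> \<le> gain_minus_loss a + 2 * \<eta>"
  proof -
    have "\<eta> * (\<Sum>k<n. wprob w k * Ev2 k) \<le> \<eta>"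
      using second_moment eta_pos by (simp add: mult_le_cancel_left1)
    thus ?thesis using bias by (simp add: M_def sum_subtractf right_diff_distrib)
  qed
  finally show ?thesis .
qed

definition "\<kappa> = \<eta> / 2"
definition "exp_potential a = (\<Sum>k<n. exp (\<kappa> * (vsum a k - dot d (A k) (xsum a))))"
definition "growth = 1 + \<kappa> * \<eta> + 4 * \<kappa>^2"

lemma kappa_pos: "\<kappa> > 0"
  using eta_pos by (simp add: \<kappa>_def)

lemma growth_pos: "growth > 0"
  using kappa_pos eta_pos by (simp add: growth_def add_pos_nonneg)

lemma exp_mult_diff_le:
  fixes l v c :: real
  assumes "l * (v - c) \<le> 1"
  shows "exp (l * (v - c)) \<le> (1 - l * c + 2 * l^2 * c^2) + l * v + 2 * l^2 * v^2"
proof -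
  have "exp (l * (v - c)) \<le> 1 + l * (v - c) + (l * (v - c))^2"
    using assms by (rule exp_le_1_plus_plus_square)
  moreover have "(l * (v - c))^2 \<le> 2 * l^2 * c^2 + 2 * l^2 * v^2"
    using zero_le_power2[of "l * (v + c)"] by (simp add: power2_eq_square algebra_simps)
  ultimately show ?thesis by (simp add: algebra_simps)
qed

lemma expectation_exp_v_est_le:
  assumes k: "k < n" and x_le: "vnorm d x \<le> 1" and eta_le: "\<eta> \<le> 1"
  shows "measure_pmf.expectation (coord_dist x) (\<lambda>j. exp (\<kappa> * (v_est x j k - dot d (A k) x))) \<le> growth"
proof -
  define c where "c = dot d (A k) x"
  have c: "\<bar>c\<bar> \<le> 1" unfolding c_def using vnorm_row_le[OF k] x_le by (rule abs_dot_le_1)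
  have "\<kappa> * (v_est x j k - c) \<le> 1" for j
  proof -
    have "\<kappa> * v_est x j k \<le> \<kappa> * (1/\<eta>)"
      using abs_v_est_le[of x j k] kappa_pos by (intro mult_left_mono) auto
    moreover have "- (\<kappa> * c) \<le> \<kappa>"
      using mult_left_mono[of "- c" 1 \<kappa>] c kappa_pos by (simp add: abs_le_iff)
    ultimately show ?thesis using eta_pos eta_le by (simp add: \<kappa>_def right_diff_distrib)
  qed
  hence "measure_pmf.expectation (coord_dist x) (\<lambda>j. exp (\<kappa> * (v_est x j k - c)))
     \<le> measure_pmf.expectation (coord_dist x)
          (\<lambda>j. (1 - \<kappa> * c + 2 * \<kappa>^2 * c^2) + \<kappa> * v_est x j k + 2 * \<kappa>^2 * (v_est x j k)^2)"
    by (intro expectation_mono_finite_pmf[OF finite_coord_dist] exp_mult_diff_le)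
  also have "\<dots> = (1 - \<kappa> * c + 2 * \<kappa>^2 * c^2)
      + \<kappa> * measure_pmf.expectation (coord_dist x) (\<lambda>j. v_est x j k)
      + 2 * \<kappa>^2 * measure_pmf.expectation (coord_dist x) (\<lambda>j. (v_est x j k)^2)"
    by (simp add: expectation_add_finite_pmf[OF finite_coord_dist])
  also have "\<dots> \<le> (1 - \<kappa> * c + 2 * \<kappa>^2 * 1) + \<kappa> * (c + \<eta>) + 2 * \<kappa>^2 * 1"
  proof -
    have "\<kappa> * measure_pmf.expectation (coord_dist x) (\<lambda>j. v_est x j k) \<le> \<kappa> * (c + \<eta>)"
      using v_est_moments(1)[OF k x_le] kappa_pos unfolding c_def
      by (intro mult_left_mono) (auto simp: abs_le_iff)
    moreover have "2 * \<kappa>^2 * measure_pmf.expectation (coord_dist x) (\<lambda>j. (v_est x j k)^2) \<le> 2 * \<kappa>^2 * 1"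
      using v_est_moments(2)[OF k x_le] by (intro mult_left_mono) auto
    moreover have "2 * \<kappa>^2 * c^2 \<le> 2 * \<kappa>^2 * 1"
      using c by (intro mult_left_mono) (auto simp: abs_le_square_iff[of c 1, simplified])
    ultimately show ?thesis by linarith
  qed
  also have "\<dots> = growth" by (simp add: growth_def algebra_simps)
  finally show ?thesis by (simp add: c_def)
qed

lemma expectation_exp_potential_step:
  assumes inv: "run_inv t a" and eta_le: "\<eta> \<le> 1"
  shows "measure_pmf.expectation (aug_step a) exp_potential \<le> growth * exp_potential a"
proof -
  define w where "w = weights a"
  define x where "x = ball_proj d (yvec a)"
  define Y where "Y k = exp (\<kappa> * (vsum a k - dot d (A k) (xsum a)))" for k
  have w: "\<And>k. k < n \<Longrightarrow> w k > 0" using inv by (simp add: w_def run_inv_weights_pos)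
  have x_le: "vnorm d x \<le> 1" unfolding x_def by (rule vnorm_ball_proj_le)
  have inner: "measure_pmf.expectation (coord_dist x) (\<lambda>j. exp_potential (aug_update a i j))
                 \<le> growth * exp_potential a" for i
  proof -
    have "(\<lambda>j. exp_potential (aug_update a i j))
            = (\<lambda>j. \<Sum>k<n. Y k * exp (\<kappa> * (v_est x j k - dot d (A k) x)))"
      by (simp add: fun_eq_iff exp_potential_def aug_update_def Let_def x_def Y_def dot_def
                    sum.distrib algebra_simps mult_exp_exp)
    hence "measure_pmf.expectation (coord_dist x) (\<lambda>j. exp_potential (aug_update a i j))
      = (\<Sum>k<n. Y k * measure_pmf.expectation (coord_dist x) (\<lambda>j. exp (\<kappa> * (v_est x j k - dot d (A k) x))))"
      by (simp add: expectation_sum_finite_pmf[OF finite_coord_dist])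
    also have "\<dots> \<le> (\<Sum>k<n. Y k * growth)"
      using expectation_exp_v_est_le[OF _ x_le eta_le]
      by (intro sum_mono mult_left_mono) (auto simp: Y_def)
    also have "\<dots> = growth * exp_potential a"
      by (simp add: exp_potential_def Y_def sum_distrib_left mult.commute)
    finally show ?thesis .
  qed
  show ?thesis
    unfolding expectation_aug_step[OF inv] w_def[symmetric] x_def[symmetric]
    by (intro sum_wprob_le[OF w] inner)
qed

lemma bdd_above_sigma_set:
  "bdd_above {Min ((\<lambda>i. \<Sum>j<d. A i j * x j) ` {..<n}) | x. vnorm d x \<le> 1}"
proof (rule bdd_aboveI, safe)
  fix x assume x: "vnorm d x \<le> 1"
  have n_pos: "0 < n" using n_ge_2 by simp
  hence "Min ((\<lambda>i. \<Sum>j<d. A i j * x j) ` {..<n}) \<le> dot d (A 0) x"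
    by (intro Min_le) (auto simp: dot_def)
  also have "\<dots> \<le> 1" using abs_dot_le_1[OF vnorm_row_le[OF n_pos] x] by simp
  finally show "Min ((\<lambda>i. \<Sum>j<d. A i j * x j) ` {..<n}) \<le> 1" .
qed

lemma Min_rows_le_sigma:
  "vnorm d x \<le> 1 \<Longrightarrow> Min ((\<lambda>i. dot d (A i) x) ` {..<n}) \<le> sigma n d A"
  unfolding sigma_def by (rule cSup_upper[OF _ bdd_above_sigma_set]) (auto simp: dot_def)

lemma sigma_nonneg: "0 \<le> sigma n d A"
proof -
  have "(\<lambda>i. dot d (A i) (\<lambda>_. 0)) ` {..<n} = {0}"
    using n_ge_2 by (simp add: dot_def image_constant_conv lessThan_empty_iff)
  thus ?thesis using Min_rows_le_sigma[of "\<lambda>_. 0"] by simp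
qed

lemma vnorm_row_sum:
  "run_inv t a \<Longrightarrow> vnorm d (yvec a) = ystep * vnorm d (row_sum A (indices a))"
  using ystep_pos by (simp add: run_inv_def vnorm_scale)

lemma ftrl_regret:
  assumes inv: "run_inv t a"
  shows "vnorm d (row_sum A (indices a)) \<le> gain a + t * ystep / 2 + 1 / (2 * ystep)"
proof -
  have "ystep * vnorm d (row_sum A (indices a)) \<le> ystep * gain a + t * ystep^2 / 2 + 1/2"
    using vnorm_le_ball_potential[of d "yvec a"] inv
    unfolding vnorm_row_sum[OF inv] run_inv_def by linarith
  also have "\<dots> = ystep * (gain a + t * ystep / 2 + 1 / (2 * ystep))"
    using ystep_pos by (simp add: field_simps power2_eq_square)
  finally show ?thesis using ystep_pos by simp
qed

lemma mw_regret:
  assumes inv: "run_inv t a" and k: "k < n"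
  shows "mw_loss a \<le> vsum a k + ln (real n) / \<eta> + \<eta> * mw_loss2 a"
proof -
  have "exp (- \<eta> * vsum a k) \<le> weights a k" using inv k unfolding run_inv_def by blast
  also have "\<dots> \<le> wsum (weights a)"
    unfolding wsum_def using k inv by (intro member_le_sum) (auto simp: run_inv_def less_imp_le)
  also have "\<dots> \<le> real n * exp (- \<eta> * mw_loss a + \<eta>^2 * mw_loss2 a)"
    using inv unfolding run_inv_def by blast
  also have "\<dots> = exp (ln (real n) - \<eta> * mw_loss a + \<eta>^2 * mw_loss2 a)"
    using n_ge_2 by (simp add: exp_add exp_diff)
  finally have "\<eta> * mw_loss a \<le> \<eta> * (vsum a k + ln (real n) / \<eta> + \<eta> * mw_loss2 a)"
    using eta_pos by (simp add: algebra_simps power2_eq_square)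
  thus ?thesis using eta_pos by simp
qed

lemma exists_row_le_sigma:
  assumes X: "vnorm d X \<le> t" and t: "t > 0"
  obtains k where "k < n" and "dot d (A k) X \<le> t * sigma n d A"
proof -
  define xbar where "xbar = (\<lambda>j. X j / t)"
  define rows where "rows = (\<lambda>i. dot d (A i) xbar) ` {..<n}"
  have "vnorm d xbar \<le> 1" using X t by (simp add: xbar_def vnorm_divide divide_le_eq_1)
  hence Min_le: "Min rows \<le> sigma n d A" unfolding rows_def by (rule Min_rows_le_sigma)
  have "rows \<noteq> {}" using n_ge_2 by (simp add: rows_def lessThan_empty_iff)
  hence "Min rows \<in> rows" by (intro Min_in) (simp add: rows_def)
  then obtain k where k: "k \<in> {..<n}" and "Min rows = dot d (A k) xbar"
    unfolding rows_def by (rule imageE)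
  moreover have "dot d (A k) X = t * dot d (A k) xbar"
    using t by (simp add: dot_def xbar_def sum_distrib_left)
  ultimately show ?thesis using that k t Min_le by (simp add: mult_left_mono)
qed

lemma exp_potential_pos: "exp_potential a > 0"
  unfolding exp_potential_def using n_ge_2 by (intro sum_pos) (auto simp: lessThan_empty_iff)

lemma exp_potential_regret:
  assumes k: "k < n"
  shows "vsum a k - dot d (A k) (xsum a) \<le> ln (exp_potential a) / \<kappa>"
proof -
  have "exp (\<kappa> * (vsum a k - dot d (A k) (xsum a))) \<le> exp_potential a"
    unfolding exp_potential_def using k
    by (intro member_le_sum[where f = "\<lambda>k. exp (\<kappa> * (vsum a k - dot d (A k) (xsum a)))"]) auto
  hence "\<kappa> * (vsum a k - dot d (A k) (xsum a)) \<le> ln (exp_potential a)"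
    using exp_potential_pos by (simp add: ln_ge_iff)
  thus ?thesis using kappa_pos by (simp add: field_simps)
qed

text \<open>Y0 is the bound on E[exp_potential] after T steps; ln y <= y/Y0 - 1 + ln Y0 turns the
  exponential potential into a quantity that is linear in exp_potential.\<close>
definition "Y0 = real n * growth ^ T"
definition "regret_const = (ln Y0 - 1) / \<kappa> + ln (real n) / \<eta> + T * ystep / 2 + 1 / (2 * ystep)"
definition "regret_bound a = gain_minus_loss a + exp_potential a / (\<kappa> * Y0) + regret_const"

lemma Y0_pos: "Y0 > 0"
  using growth_pos n_ge_2 by (simp add: Y0_def)

lemma excess_le_regret_bound:
  assumes inv: "run_inv T a"
  shows "vnorm d (row_sum A (indices a)) - T * sigma n d A \<le> regret_bound a"
proof -
  have "vnorm d (xsum a) \<le> T" using inv by (simp add: run_inv_def)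
  moreover have "real T > 0" using T_pos by simp
  ultimately obtain k where k: "k < n" and good_row: "dot d (A k) (xsum a) \<le> T * sigma n d A"
    by (rule exists_row_le_sigma)
  have "ln (exp_potential a) = ln (exp_potential a / Y0) + ln Y0"
    using ln_divide_pos[OF exp_potential_pos Y0_pos] by simp
  also have "\<dots> \<le> exp_potential a / Y0 - 1 + ln Y0"
    using exp_potential_pos Y0_pos ln_le_minus_one[of "exp_potential a / Y0"] by simp
  finally have "ln (exp_potential a) / \<kappa> \<le> (exp_potential a / Y0 - 1 + ln Y0) / \<kappa>"
    using kappa_pos by (simp add: divide_right_mono)
  also have "\<dots> = exp_potential a / (\<kappa> * Y0) + (ln Y0 - 1) / \<kappa>"
    by (simp add: add_divide_distrib diff_divide_distrib mult.commute)
  finally have ln_bound: "ln (exp_potential a) / \<kappa> \<le> exp_potential a / (\<kappa> * Y0) + (ln Y0 - 1) / \<kappa>" .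
  show ?thesis
    using ftrl_regret[OF inv] mw_regret[OF inv k] exp_potential_regret[OF k, of a] good_row ln_bound
    unfolding regret_bound_def regret_const_def gain_minus_loss_def by linarith
qed

lemma expectation_regret_bound_le:
  assumes "\<eta> \<le> 1"
  shows "measure_pmf.expectation (aug_run T) regret_bound \<le> 2 * \<eta> * T + 1 / \<kappa> + regret_const"
proof -
  have fin: "finite (set_pmf (aug_run T))" by (rule finite_aug_run)
  have "measure_pmf.expectation (aug_run T) gain_minus_loss \<le> gain_minus_loss aug_init + T * (2 * \<eta>)"
    by (rule expectation_aug_run_additive_drift) (rule expectation_gain_minus_loss_step)
  hence gain: "measure_pmf.expectation (aug_run T) gain_minus_loss \<le> 2 * \<eta> * T"
    by (simp add: gain_minus_loss_def algebra_simps)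
  have "measure_pmf.expectation (aug_run T) exp_potential \<le> growth ^ T * n"
    using expectation_aug_run_multiplicative_drift[OF expectation_exp_potential_step[OF _ assms]]
      growth_pos by (simp add: exp_potential_def dot_def)
  hence "measure_pmf.expectation (aug_run T) exp_potential / (\<kappa> * Y0) \<le> Y0 / (\<kappa> * Y0)"
    using kappa_pos Y0_pos by (intro divide_right_mono) (auto simp: Y0_def mult.commute)
  also have "\<dots> = 1 / \<kappa>" using Y0_pos by simp
  finally have "measure_pmf.expectation (aug_run T) exp_potential / (\<kappa> * Y0) \<le> 1 / \<kappa>" .
  moreover have "measure_pmf.expectation (aug_run T) regret_bound
      = measure_pmf.expectation (aug_run T) gain_minus_loss
        + measure_pmf.expectation (aug_run T) exp_potential / (\<kappa> * Y0) + regret_const"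
    unfolding regret_bound_def by (simp add: expectation_add_finite_pmf[OF fin])
  ultimately show ?thesis using gain by linarith
qed

section \<open>Choice of the parameters\<close>

lemma sqrt_ln_div_T_le: "sqrt (ln (real n) / T) \<le> \<epsilon> / 200"
proof -
  have "ln (real n) \<le> (\<epsilon> / 200)^2 * T"
    using T_ge eps_pos by (simp add: field_simps power2_eq_square)
  hence "ln (real n) / T \<le> (\<epsilon> / 200)^2" using T_pos by (simp add: divide_le_eq)
  thus ?thesis using eps_pos by (intro real_le_lsqrt) auto
qed

lemma eta_eq: "\<eta> = sqrt (ln (real n) / T) / 100"
  by (simp add: \<eta>_def sp_eta_def T_def)

lemma eta_le_1: "\<epsilon> \<le> 1 \<Longrightarrow> \<eta> \<le> 1"
  using sqrt_ln_div_T_le by (simp add: eta_eq)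

lemma eta_T_le: "\<eta> * T \<le> \<epsilon> * T / 20000"
proof -
  have "\<eta> \<le> \<epsilon> / 20000" using sqrt_ln_div_T_le by (simp add: eta_eq)
  thus ?thesis using mult_right_mono[of \<eta> "\<epsilon> / 20000" "real T"] by simp
qed

lemma ln_div_eta_le: "ln (real n) / \<eta> \<le> \<epsilon> * T / 2"
proof -
  define q where "q = sqrt (ln (real n) / T)"
  have q: "q > 0" using ln_n_pos T_pos by (simp add: q_def)
  have "ln (real n) = q^2 * T" using ln_n_pos T_pos by (simp add: q_def)
  hence "ln (real n) / \<eta> = 100 * q * T" using q by (simp add: eta_eq q_def[symmetric] power2_eq_square)
  also have "\<dots> \<le> 100 * (\<epsilon> / 200) * T"
    using sqrt_ln_div_T_le by (intro mult_right_mono) (auto simp: q_def)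
  finally show ?thesis by simp
qed

lemma ystep_terms_le: "T * ystep / 2 + 1 / (2 * ystep) \<le> 3 * \<epsilon> * T / 8"
proof -
  define s where "s = sqrt (2 * T)"
  have s: "s > 0" using T_pos by (simp add: s_def)
  have T: "real T = s * s / 2" using T_pos by (simp add: s_def)
  have "T * ystep / 2 + 1 / (2 * ystep) = 3 * s / 4"
    using s by (simp add: ystep_def s_def[symmetric] T field_simps)
  also have "s \<le> \<epsilon> * T / 2"
  proof -
    have "ln 2 \<le> ln (real n)" using n_ge_2 by simp
    hence "1/2 \<le> ln (real n)" using ln_2_ge_half by linarith
    hence "8 \<le> \<epsilon>^2 * T" using T_ge eps_pos by (simp add: field_simps)
    hence "2 * T \<le> (\<epsilon> * T / 2)^2" using T_pos by (simp add: power2_eq_square field_simps)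
    thus ?thesis unfolding s_def using eps_pos T_pos by (intro real_le_lsqrt) auto
  qed
  finally show ?thesis by simp
qed

lemma ln_Y0_le: "ln Y0 \<le> ln (real n) + 3 / 2 * \<eta>^2 * T"
proof -
  have "ln growth \<le> growth - 1" using growth_pos by (rule ln_le_minus_one)
  hence "ln growth \<le> 3 / 2 * \<eta>^2" by (simp add: growth_def \<kappa>_def power2_eq_square)
  thus ?thesis
    using n_ge_2 growth_pos T_pos by (simp add: Y0_def ln_mult ln_realpow mult_left_mono mult.commute)
qed

lemma error_terms_le: "2 * \<eta> * T + 1 / \<kappa> + regret_const \<le> 2 * \<epsilon> * T"
proof -
  have "2 * \<eta> * T + 1 / \<kappa> + regret_const
          = 2 * \<eta> * T + 2 * ln Y0 / \<eta> + ln (real n) / \<eta> + (T * ystep / 2 + 1 / (2 * ystep))"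
    using eta_pos by (simp add: regret_const_def \<kappa>_def field_simps)
  also have "2 * ln Y0 / \<eta> \<le> 2 * ln (real n) / \<eta> + 3 * \<eta> * T"
    using ln_Y0_le eta_pos by (simp add: field_simps power2_eq_square)
  finally have "2 * \<eta> * T + 1 / \<kappa> + regret_const
                  \<le> 5 * (\<eta> * T) + 3 * (ln (real n) / \<eta>) + (T * ystep / 2 + 1 / (2 * ystep))"
    by simp
  also have "\<dots> \<le> 5 * (\<epsilon> * T / 20000) + 3 * (\<epsilon> * T / 2) + 3 * \<epsilon> * T / 8"
    using eta_T_le ln_div_eta_le ystep_terms_le by linarith
  also have "\<dots> \<le> 2 * \<epsilon> * T" using eps_pos by simp
  finally show ?thesis .
qed

definition "good_event = {(s, is). dual_val n d A (pbar T is) \<le> sigma n d A + 4 * \<epsilon>}"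

lemma prob_good_event_eq:
  "measure_pmf.prob (sp_run n d A \<epsilon> T) good_event = measure_pmf.prob (aug_run T) (forget -` good_event)"
  by (simp add: map_forget_aug_run[symmetric])

lemma vnorm_row_sum_le_length: "set is \<subseteq> {..<n} \<Longrightarrow> vnorm d (row_sum A is) \<le> length is"
proof (induction "is")
  case (Cons i "is")
  have "vnorm d (row_sum A (i # is)) \<le> vnorm d (A i) + vnorm d (row_sum A is)"
    using vnorm_add_le[of d "A i" "row_sum A is"] by (simp add: row_sum_def)
  thus ?case using Cons vnorm_row_le[of i] by simp
qed (simp add: row_sum_def)

lemma forget_in_good_event:
  assumes inv: "run_inv T a" and excess: "vnorm d (row_sum A (indices a)) - T * sigma n d A \<le> 4 * \<epsilon> * T"
  shows "forget a \<in> good_event"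
proof -
  have "dual_val n d A (pbar T (indices a)) \<le> vnorm d (row_sum A (indices a)) / T"
    using inv by (intro dual_val_pbar_le) (simp add: run_inv_def)
  also have "\<dots> \<le> sigma n d A + 4 * \<epsilon>"
    using excess T_pos by (simp add: divide_le_eq algebra_simps)
  finally show ?thesis by (simp add: good_event_def forget_def)
qed

lemma prob_good_event_small_eps:
  assumes "\<epsilon> \<le> 1"
  shows "measure_pmf.prob (sp_run n d A \<epsilon> T) good_event \<ge> 1/2"
  unfolding prob_good_event_eq
proof (rule prob_ge_half_by_Markov[OF finite_aug_run])
  let ?excess = "\<lambda>a. vnorm d (row_sum A (indices a)) - T * sigma n d A"
  show "0 < 4 * \<epsilon> * T" using eps_pos T_pos by simp
  show "0 \<le> ?excess a" if "a \<in> set_pmf (aug_run T)" for a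
  proof -
    have "set (indices a) \<subseteq> {..<n}" and len: "length (indices a) = T"
      using run_inv_aug_run[OF that] by (simp_all add: run_inv_def)
    moreover have "indices a \<noteq> []" using len T_pos by auto
    ultimately show ?thesis using length_mult_sigma_le[of "indices a" n d A] by simp
  qed
  have "measure_pmf.expectation (aug_run T) ?excess \<le> measure_pmf.expectation (aug_run T) regret_bound"
    by (intro expectation_mono_finite_pmf[OF finite_aug_run] excess_le_regret_bound run_inv_aug_run)
  also have "\<dots> \<le> 2 * \<epsilon> * T"
    using expectation_regret_bound_le[OF eta_le_1[OF assms]] error_terms_le by linarith
  finally show "measure_pmf.expectation (aug_run T) ?excess \<le> 4 * \<epsilon> * T / 2" by simp
  show "a \<in> forget -` good_event" if "a \<in> set_pmf (aug_run T)" and "?excess a < 4 * \<epsilon> * T" for a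
    using forget_in_good_event[OF run_inv_aug_run[OF that(1)]] that(2) by simp
qed

lemma prob_good_event_large_eps:
  assumes "\<epsilon> > 1"
  shows "measure_pmf.prob (sp_run n d A \<epsilon> T) good_event = 1"
proof -
  have "forget a \<in> good_event" if "a \<in> set_pmf (aug_run T)" for a
  proof (rule forget_in_good_event)
    show inv: "run_inv T a" using that by (rule run_inv_aug_run)
    have "vnorm d (row_sum A (indices a)) \<le> T"
      using vnorm_row_sum_le_length[of "indices a"] inv by (simp add: run_inv_def)
    moreover have "real T * 1 \<le> real T * (4 * \<epsilon>)" using assms by (intro mult_left_mono) auto
    moreover have "0 \<le> real T * sigma n d A" using sigma_nonneg by simp
    ultimately show "vnorm d (row_sum A (indices a)) - T * sigma n d A \<le> 4 * \<epsilon> * T"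
      by (simp add: algebra_simps)
  qed
  thus ?thesis unfolding prob_good_event_eq
    by (subst measure_pmf.prob_eq_1) (auto simp: AE_measure_pmf_iff)
qed

lemma prob_good_event:
  "measure_pmf.prob (sp_run n d A \<epsilon> (sp_T n \<epsilon>))
     {(s, is). dual_val n d A (pbar (sp_T n \<epsilon>) is) \<le> sigma n d A + 4 * \<epsilon>} \<ge> 1/2"
  using prob_good_event_small_eps prob_good_event_large_eps
  unfolding good_event_def T_def by (cases "\<epsilon> \<le> 1") auto

end

theorem mainTheorem4:
  shows "\<exists>C::real. \<forall>(n::nat) (d::nat) (A::nat \<Rightarrow> nat \<Rightarrow> real) (\<epsilon>::real).
           n \<ge> 2 \<longrightarrow> \<epsilon> > 0 \<longrightarrow> (\<forall>i<n. vnorm d (A i) \<le> 1) \<longrightarrow>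
           measure_pmf.prob (sp_run n d A \<epsilon> (sp_T n \<epsilon>))
             {(s, is). dual_val n d A (pbar (sp_T n \<epsilon>) is) \<le> sigma n d A + C * \<epsilon>}
           \<ge> 1/2"
proof (intro exI[of _ 4] allI impI)
  fix n d :: nat and A :: "nat \<Rightarrow> nat \<Rightarrow> real" and \<epsilon> :: real
  assume "n \<ge> 2" "\<epsilon> > 0" "\<forall>i<n. vnorm d (A i) \<le> 1"
  then interpret sublinear_perceptron n d A \<epsilon> by unfold_locales auto
  show "measure_pmf.prob (sp_run n d A \<epsilon> (sp_T n \<epsilon>))
      {(s, is). dual_val n d A (pbar (sp_T n \<epsilon>) is) \<le> sigma n d A + 4 * \<epsilon>} \<ge> 1/2"
    by (rule prob_good_event)
qed

end
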